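(* Let $F$ be a fixed connected graph. Then, as $n\to\infty$, $$\binom{n}{2}\le L(n,F)+\mathrm{exa}_1(n,F)\le \binom{n}{2}+O(n).$$ Consequently, if $F$ is not a tree, then $L(n,F)=\binom{n}{2}-(1+o(1))\,\mathrm{ex}(n,F)$.
   Context: $\mathrm{exa}_1(n,F)$ is the largest number of edges of a simple graph on $n$ vertices containing exactly one subgraph isomorphic to $F$; $\mathrm{ex}(n,F)$ is the largest number of edges of a graph on $n$ vertices containing no subgraph isomorphic to $F$. Search game: given a vertex set $V$ with $|V|=n$, an unknown edge set $E_0$ of pairs from $V$ is hidden such that the graph $(V,E_0)$ is isomorphic to $F$ together with $n-|V(F)|$ isolated vertices. A query is a pair of vertices of $V$, answered YES if it belongs to $E_0$ and NO otherwise; queries may be chosen adaptively. The game ends when $E_0$ is determined, i.e. exactly one such edge set is consistent with all answers. $L(n,F)$ is the minimum, over all questioning strategies, of the maximum over all possible $E_0$ of the number of queries asked. *)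

theory Defs
  imports Complex_Main
begin

definition vpairs :: "'a set \<Rightarrow> 'a set set" where
  "vpairs V = {e. \<exists>u v. e = {u, v} \<and> u \<in> V \<and> v \<in> V \<and> u \<noteq> v}"

definition simple_graph :: "'a set \<Rightarrow> 'a set set \<Rightarrow> bool" where
  "simple_graph V E \<longleftrightarrow> finite V \<and> E \<subseteq> vpairs V"

definition graph_connected :: "'a set \<Rightarrow> 'a set set \<Rightarrow> bool" where
  "graph_connected V E \<longleftrightarrow> V \<noteq> {} \<and>
     (\<forall>u\<in>V. \<forall>v\<in>V. (u, v) \<in> {(x, y). {x, y} \<in> E}\<^sup>*)"

definition has_cycle :: "'a set \<Rightarrow> 'a set set \<Rightarrow> bool" where
  "has_cycle V E \<longleftrightarrow> (\<exists>vs. length vs \<ge> 3 \<and> distinct vs \<and> set vs \<subseteq> V \<and>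
     (\<forall>i < length vs. {vs ! i, vs ! ((i + 1) mod length vs)} \<in> E))"

definition is_tree :: "'a set \<Rightarrow> 'a set set \<Rightarrow> bool" where
  "is_tree V E \<longleftrightarrow> graph_connected V E \<and> \<not> has_cycle V E"

definition graph_iso :: "'a set \<Rightarrow> 'a set set \<Rightarrow> 'b set \<Rightarrow> 'b set set \<Rightarrow> bool" where
  "graph_iso V1 E1 V2 E2 \<longleftrightarrow> (\<exists>f. bij_betw f V1 V2 \<and>
     (\<forall>u\<in>V1. \<forall>v\<in>V1. {u, v} \<in> E1 \<longleftrightarrow> {f u, f v} \<in> E2))"

definition copies :: "nat \<Rightarrow> nat set set \<Rightarrow> 'b set \<Rightarrow> 'b set set \<Rightarrow> (nat set \<times> nat set set) set" where
  "copies n E VF EF = {(W, D). W \<subseteq> {0..<n} \<and> D \<subseteq> E \<and> D \<subseteq> vpairs W \<and> graph_iso W D VF EF}"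

definition exa1 :: "nat \<Rightarrow> 'b set \<Rightarrow> 'b set set \<Rightarrow> nat" where
  "exa1 n VF EF = Max {card E | E. E \<subseteq> vpairs {0..<n} \<and> card (copies n E VF EF) = 1}"

definition ex_num :: "nat \<Rightarrow> 'b set \<Rightarrow> 'b set set \<Rightarrow> nat" where
  "ex_num n VF EF = Max {card E | E. E \<subseteq> vpairs {0..<n} \<and> copies n E VF EF = {}}"

text \<open>Search game. Possible hidden edge sets on V = {0..<n}: (V,E0) is isomorphic to
  F together with n - |V(F)| isolated vertices (disjoint union built on type 'b + nat).\<close>
definition hidden :: "nat \<Rightarrow> 'b set \<Rightarrow> 'b set set \<Rightarrow> nat set set set" where
  "hidden n VF EF = {E0. E0 \<subseteq> vpairs {0..<n} \<and>
     graph_iso {0..<n} E0 (Inl ` VF \<union> Inr ` {0..<n - card VF}) ((`) Inl ` EF)}"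

text \<open>Adaptive questioning strategies as decision trees: Ask e Tyes Tno.\<close>
datatype qtree = Done | Ask "nat set" qtree qtree

text \<open>solves n T C: strategy T, started when C is the set of edge sets still consistent,
  only asks pairs of vertices and stops only when the hidden set is determined.\<close>
fun solves :: "nat \<Rightarrow> qtree \<Rightarrow> nat set set set \<Rightarrow> bool" where
  "solves n Done C = (\<forall>A\<in>C. \<forall>B\<in>C. A = B)"
| "solves n (Ask e T1 T2) C = (e \<in> vpairs {0..<n} \<and>
     solves n T1 {E \<in> C. e \<in> E} \<and> solves n T2 {E \<in> C. e \<notin> E})"

fun cost :: "qtree \<Rightarrow> nat set set \<Rightarrow> nat" where
  "cost Done E0 = 0"
| "cost (Ask e T1 T2) E0 = Suc (if e \<in> E0 then cost T1 E0 else cost T2 E0)"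

definition Lgame :: "nat \<Rightarrow> 'b set \<Rightarrow> 'b set set \<Rightarrow> nat" where
  "Lgame n VF EF = (LEAST k. \<exists>T. solves n T (hidden n VF EF) \<and>
      (\<forall>E0 \<in> hidden n VF EF. cost T E0 \<le> k))"

end

theory Submission
  imports Defs "HOL-Library.FuncSet"
begin

text \<open>A copy of the connected graph \<open>F\<close> in \<open>K\<^sub>n\<close> is determined by its edge set, which is the image
  of \<open>EF\<close> under an injection of \<open>VF\<close> into the vertices.

  Lower bound: against the adversary that answers NO whenever some consistent copy allows it, a
  strategy ends with the hidden copy being the only copy avoiding the set \<open>N\<close> of pairs answered NO.
  So the complement of \<open>N\<close> contains exactly one copy, \<open>C(n,2) - |N| \<le> exa\<^sub>1\<close>, and at least
  \<open>|N|\<close> queries were asked.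

  Upper bound: take a graph \<open>G\<close> with \<open>exa\<^sub>1\<close> edges and a unique copy, and query the pairs
  outside \<open>G\<close>. If all answers are NO, the hidden copy is the one in \<open>G\<close>; after the first YES the
  hidden copy is connected and contains the known edge, so it is found by querying all pairs at
  each of its at most \<open>|VF|\<close> vertices, that is, with at most \<open>|VF| n\<close> further queries.

  Moreover \<open>exa\<^sub>1\<close> and \<open>ex\<close> differ by \<open>O(n)\<close>: deleting an edge of the unique copy leaves an
  \<open>F\<close>-free graph, and in an \<open>F\<close>-free graph one may delete the edges at \<open>|VF|\<close> vertices and plant a
  copy of \<open>F\<close> on them. If \<open>F\<close> contains a cycle of length \<open>L\<close>, the deletion method (a graph with
  \<open>2dn\<close> edges containing at most \<open>(8d)\<^sup>L\<close> cycles of length \<open>L\<close>, one edge of each removed) gives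
  \<open>ex(n, F) \<ge> dn\<close> for all large \<open>n\<close>, so the \<open>O(n)\<close> error is \<open>o(ex(n, F))\<close>.\<close>

section \<open>Pairs of vertices\<close>

lemma vpairs_eq: "vpairs V = {e. e \<subseteq> V \<and> card e = 2}"
  unfolding vpairs_def by (auto simp: card_2_iff)

lemma vpairsI: "u \<in> V \<Longrightarrow> v \<in> V \<Longrightarrow> u \<noteq> v \<Longrightarrow> {u, v} \<in> vpairs V"
  unfolding vpairs_def by blast

lemma vpairsE:
  assumes "e \<in> vpairs V"
  obtains u v where "e = {u, v}" "u \<in> V" "v \<in> V" "u \<noteq> v"
  using assms unfolding vpairs_def by blast

lemma vpairs_subset: "e \<in> vpairs V \<Longrightarrow> e \<subseteq> V"
  unfolding vpairs_def by blast

lemma vpairs_mono: "V \<subseteq> W \<Longrightarrow> vpairs V \<subseteq> vpairs W"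
  unfolding vpairs_def by blast

lemma finite_vpairs: "finite V \<Longrightarrow> finite (vpairs V)"
  unfolding vpairs_eq by (rule finite_subset[of _ "Pow V"]) auto

lemma card_vpairs: "finite V \<Longrightarrow> card (vpairs V) = card V choose 2"
  unfolding vpairs_eq by (simp add: n_subsets)

lemma finite_subset_vpairs: "finite V \<Longrightarrow> E \<subseteq> vpairs V \<Longrightarrow> finite E"
  using finite_subset finite_vpairs by blast

definition incident :: "'a set \<Rightarrow> 'a set set" where
  "incident K = {e. e \<inter> K \<noteq> {}}"

definition pairs_at :: "nat \<Rightarrow> nat \<Rightarrow> nat set set" where
  "pairs_at n x = {e \<in> vpairs {0..<n}. x \<in> e}"

lemma Int_incident_insert:
  "E \<subseteq> vpairs {0..<n} \<Longrightarrow> E \<inter> incident (insert x K) = E \<inter> incident K \<union> E \<inter> pairs_at n x"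
  unfolding incident_def pairs_at_def by auto

lemma card_pairs_at: "card (pairs_at n x) \<le> n"
proof -
  have "pairs_at n x \<subseteq> (\<lambda>y. {x, y}) ` {0..<n}"
    unfolding pairs_at_def by (auto elim!: vpairsE simp: insert_commute)
  then have "card (pairs_at n x) \<le> card ((\<lambda>y. {x, y}) ` {0..<n})"
    by (intro card_mono) auto
  also have "\<dots> \<le> n"
    using card_image_le[of "{0..<n}" "\<lambda>y. {x, y}"] by simp
  finally show ?thesis .
qed

lemma card_vpairs_incident:
  assumes "finite K"
  shows "card (vpairs {0..<n} \<inter> incident K) \<le> card K * n"
proof -
  have "vpairs {0..<n} \<inter> incident K = (\<Union>x\<in>K. pairs_at n x)"
    unfolding incident_def pairs_at_def by blast
  then have "card (vpairs {0..<n} \<inter> incident K) \<le> (\<Sum>x\<in>K. card (pairs_at n x))"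
    using card_UN_le[OF assms] by simp
  also have "\<dots> \<le> card K * n"
    using sum_bounded_above[of K "\<lambda>x. card (pairs_at n x)" n] card_pairs_at by simp
  finally show ?thesis .
qed

lemma connected_edges_incident:
  assumes conn: "graph_connected (\<Union>E) E" and a: "a \<in> \<Union>E" "a \<in> K"
    and closed: "\<Union>(E \<inter> incident K) \<subseteq> K" and E: "E \<subseteq> vpairs V"
  shows "E \<subseteq> incident K"
proof -
  have "z \<in> K" if "z \<in> \<Union>E" for z
  proof -
    have "(a, z) \<in> {(x, y). {x, y} \<in> E}\<^sup>*"
      using conn a that unfolding graph_connected_def by blast
    then show ?thesis
    proof (induction rule: rtrancl_induct)
      case base
      show ?case using a by simp
    next
      case (step y z)
      then have "{y, z} \<in> E \<inter> incident K" unfolding incident_def by auto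
      then show ?case using closed by blast
    qed
  qed
  then have "\<Union>E \<subseteq> K" by blast
  show ?thesis
  proof
    fix e assume "e \<in> E"
    then obtain u v where "e = {u, v}" using E by (blast elim: vpairsE)
    then show "e \<in> incident K" using \<open>e \<in> E\<close> \<open>\<Union>E \<subseteq> K\<close> unfolding incident_def by blast
  qed
qed

lemma graph_iso_image:
  assumes g: "bij_betw g V W" and E: "E \<subseteq> vpairs V"
  shows "graph_iso W ((`) g ` E) V E"
proof -
  define f where "f = inv_into V g"
  have f: "bij_betw f W V" unfolding f_def using g by (rule bij_betw_inv_into)
  have "{u, w} \<in> (`) g ` E \<longleftrightarrow> {f u, f w} \<in> E" if "u \<in> W" "w \<in> W" for u w
  proof -
    have fuw: "f u \<in> V" "f w \<in> V" "g (f u) = u" "g (f w) = w"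
      using that f g by (auto simp: f_def bij_betw_inv_into_right dest: bij_betwE)
    have "{u, w} \<in> (`) g ` E \<longleftrightarrow> (\<exists>e\<in>E. g ` {f u, f w} = g ` e)"
      using fuw by auto
    also have "\<dots> \<longleftrightarrow> {f u, f w} \<in> E"
    proof -
      have "g ` {f u, f w} = g ` e \<longleftrightarrow> {f u, f w} = e" if "e \<in> E" for e
      proof (rule inj_on_image_eq_iff[OF bij_betw_imp_inj_on[OF g]])
        show "{f u, f w} \<subseteq> V" "e \<subseteq> V" using fuw E that vpairs_subset by auto
      qed
      then show ?thesis by auto
    qed
    finally show ?thesis .
  qed
  then show ?thesis unfolding graph_iso_def using f by blast
qed

lemma graph_iso_imp_image:
  assumes iso: "graph_iso W D V E" and D: "D \<subseteq> vpairs W" and E: "E \<subseteq> vpairs V"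
  obtains g where "bij_betw g V W" "D = (`) g ` E"
proof -
  obtain f where f: "bij_betw f W V" and fD: "\<forall>u\<in>W. \<forall>w\<in>W. {u, w} \<in> D \<longleftrightarrow> {f u, f w} \<in> E"
    using iso unfolding graph_iso_def by blast
  define g where "g = inv_into W f"
  have g: "bij_betw g V W" unfolding g_def using f by (rule bij_betw_inv_into)
  have gf: "g (f u) = u" if "u \<in> W" for u
    using f that by (simp add: g_def bij_betw_inv_into_left)
  have fg: "f (g a) = a" if "a \<in> V" for a
    using f that by (simp add: g_def bij_betw_inv_into_right)
  have "D = (`) g ` E"
  proof
    show "D \<subseteq> (`) g ` E"
    proof
      fix d assume "d \<in> D"
      then obtain u w where d: "d = {u, w}" "u \<in> W" "w \<in> W" using D by (blast elim: vpairsE)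
      then have "{f u, f w} \<in> E" using fD \<open>d \<in> D\<close> by blast
      moreover have "d = g ` {f u, f w}" using d gf by simp
      ultimately show "d \<in> (`) g ` E" by blast
    qed
    show "(`) g ` E \<subseteq> D"
    proof
      fix d assume "d \<in> (`) g ` E"
      then obtain a b where ab: "{a, b} \<in> E" "a \<in> V" "b \<in> V" "d = {g a, g b}"
        using E by (auto elim!: vpairsE)
      moreover have "g a \<in> W" "g b \<in> W" using g ab by (auto dest: bij_betwE)
      ultimately show "d \<in> D" using fD fg by auto
    qed
  qed
  with g show thesis by (rule that)
qed

section \<open>Copies of a connected graph\<close>

locale connected_pattern =
  fixes VF :: "'b set" and EF :: "'b set set"
  assumes simple: "simple_graph VF EF" and connected: "graph_connected VF EF"
    and edge_exists: "EF \<noteq> {}"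
begin

lemma finite_VF: "finite VF"
  using simple unfolding simple_graph_def by blast

lemma EF_vpairs: "EF \<subseteq> vpairs VF"
  using simple unfolding simple_graph_def by blast

lemma Union_EF: "\<Union>EF = VF"
proof
  show "\<Union>EF \<subseteq> VF" using EF_vpairs vpairs_subset by blast
  show "VF \<subseteq> \<Union>EF"
  proof
    fix a assume a: "a \<in> VF"
    obtain x y where xy: "{x, y} \<in> EF" "x \<in> VF"
      using edge_exists EF_vpairs by (blast elim: vpairsE)
    have "(a, x) \<in> {(x, y). {x, y} \<in> EF}\<^sup>*"
      using connected a xy unfolding graph_connected_def by blast
    then show "a \<in> \<Union>EF"
      using xy by (cases rule: converse_rtranclE) auto
  qed
qed

definition embed :: "('b \<Rightarrow> nat) \<Rightarrow> nat set set" where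
  "embed g = (`) g ` EF"

definition Kn_copies :: "nat \<Rightarrow> nat set set set" where
  "Kn_copies n = {embed g | g. inj_on g VF \<and> g ` VF \<subseteq> {0..<n}}"

lemma Union_embed: "\<Union>(embed g) = g ` VF"
  unfolding embed_def using Union_EF by blast

lemma embed_vpairs:
  assumes "inj_on g VF"
  shows "embed g \<subseteq> vpairs (g ` VF)"
proof
  fix e assume "e \<in> embed g"
  then obtain u v where "e = {g u, g v}" "u \<in> VF" "v \<in> VF" "u \<noteq> v"
    using EF_vpairs unfolding embed_def by (auto elim!: vpairsE)
  then show "e \<in> vpairs (g ` VF)" using assms by (auto intro!: vpairsI simp: inj_on_eq_iff)
qed

lemma card_embed: "inj_on g VF \<Longrightarrow> card (embed g) = card EF"
  unfolding embed_def by (rule card_image, rule inj_on_image) (simp add: Union_EF)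

lemma embed_connected: "graph_connected (\<Union>(embed g)) (embed g)"
  unfolding graph_connected_def Union_embed
proof (intro conjI ballI)
  show "g ` VF \<noteq> {}" using connected unfolding graph_connected_def by blast
next
  fix x y assume "x \<in> g ` VF" "y \<in> g ` VF"
  then obtain a b where ab: "a \<in> VF" "b \<in> VF" "x = g a" "y = g b" by blast
  have "(a, b) \<in> {(x, y). {x, y} \<in> EF}\<^sup>*"
    using connected ab unfolding graph_connected_def by blast
  then have "(g a, g b) \<in> {(x, y). {x, y} \<in> embed g}\<^sup>*"
  proof (induction rule: rtrancl_induct)
    case (step c d)
    from step.hyps(2) have "{c, d} \<in> EF" by simp
    then have "g ` {c, d} \<in> embed g" unfolding embed_def by (rule imageI)
    with step.IH show ?case by (simp add: rtrancl_into_rtrancl)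
  qed simp
  then show "(x, y) \<in> {(x, y). {x, y} \<in> embed g}\<^sup>*" using ab by simp
qed

lemma Kn_copies_vpairs: "D \<in> Kn_copies n \<Longrightarrow> D \<subseteq> vpairs {0..<n}"
  unfolding Kn_copies_def using embed_vpairs vpairs_mono by blast

lemma finite_Kn_copies: "finite (Kn_copies n)"
proof (rule finite_subset)
  show "Kn_copies n \<subseteq> Pow (vpairs {0..<n})" using Kn_copies_vpairs by blast
  show "finite (Pow (vpairs {0..<n}))" by (simp add: finite_vpairs)
qed

lemma card_Kn_copies: "D \<in> Kn_copies n \<Longrightarrow> card D = card EF"
  unfolding Kn_copies_def using card_embed by blast

lemma Kn_copies_nonempty: "D \<in> Kn_copies n \<Longrightarrow> D \<noteq> {}"
  unfolding Kn_copies_def embed_def using edge_exists by auto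

lemma card_Union_Kn_copies: "D \<in> Kn_copies n \<Longrightarrow> card (\<Union>D) = card VF"
  unfolding Kn_copies_def by (auto simp: Union_embed card_image)

lemma Kn_copies_connected: "D \<in> Kn_copies n \<Longrightarrow> graph_connected (\<Union>D) D"
  unfolding Kn_copies_def using embed_connected by blast

lemma Kn_copies_subset_eq:
  assumes "D \<in> Kn_copies n" "D' \<in> Kn_copies n" "D \<subseteq> D'"
  shows "D = D'"
proof (rule card_subset_eq)
  show "finite D'" using Kn_copies_vpairs[OF assms(2)] finite_subset_vpairs by blast
qed (use assms card_Kn_copies[OF assms(1)] card_Kn_copies[OF assms(2)] in auto)

lemma Kn_copy_in_block:
  assumes "card VF \<le> n"
  obtains D where "D \<in> Kn_copies n" "\<Union>D \<subseteq> {n - card VF..<n}"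
proof -
  have "\<exists>g. bij_betw g VF {n - card VF..<n}"
    by (rule finite_same_card_bij[OF finite_VF]) (use assms in simp_all)
  then obtain g where g: "bij_betw g VF {n - card VF..<n}" ..
  then have "inj_on g VF" "g ` VF \<subseteq> {0..<n}" by (auto simp: bij_betw_def)
  then have "embed g \<in> Kn_copies n" unfolding Kn_copies_def by blast
  moreover have "\<Union>(embed g) \<subseteq> {n - card VF..<n}"
    using g by (simp add: Union_embed bij_betw_def)
  ultimately show thesis by (rule that)
qed

lemma copies_iff:
  "(W, D) \<in> copies n E VF EF \<longleftrightarrow> D \<in> Kn_copies n \<and> D \<subseteq> E \<and> W = \<Union>D"
proof
  assume "(W, D) \<in> copies n E VF EF"
  then have W: "W \<subseteq> {0..<n}" "D \<subseteq> E" "D \<subseteq> vpairs W" and iso: "graph_iso W D VF EF"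
    unfolding copies_def by auto
  obtain g where g: "bij_betw g VF W" "D = embed g"
    using graph_iso_imp_image[OF iso W(3) EF_vpairs] unfolding embed_def by blast
  then have "inj_on g VF" "g ` VF \<subseteq> {0..<n}" using W(1) by (auto simp: bij_betw_def)
  then have "D \<in> Kn_copies n" unfolding Kn_copies_def using g(2) by blast
  moreover have "W = \<Union>D" using g by (simp add: Union_embed bij_betw_def)
  ultimately show "D \<in> Kn_copies n \<and> D \<subseteq> E \<and> W = \<Union>D" using W by blast
next
  assume "D \<in> Kn_copies n \<and> D \<subseteq> E \<and> W = \<Union>D"
  then obtain g where g: "D = embed g" "inj_on g VF" "g ` VF \<subseteq> {0..<n}" "D \<subseteq> E"
    and W: "W = g ` VF"
    unfolding Kn_copies_def by (auto simp: Union_embed)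
  have "graph_iso W D VF EF"
    unfolding g(1) embed_def W by (rule graph_iso_image[OF inj_on_imp_bij_betw[OF g(2)] EF_vpairs])
  then show "(W, D) \<in> copies n E VF EF"
    unfolding copies_def using g W embed_vpairs by auto
qed

lemma copies_eq: "copies n E VF EF = (\<lambda>D. (\<Union>D, D)) ` {D \<in> Kn_copies n. D \<subseteq> E}"
  by (auto simp: copies_iff)

lemma card_copies: "card (copies n E VF EF) = card {D \<in> Kn_copies n. D \<subseteq> E}"
  unfolding copies_eq by (rule card_image) (auto intro: inj_onI)

lemma Inl_EF_vpairs: "(`) Inl ` EF \<subseteq> vpairs (Inl ` VF \<union> (R :: ('b + 'c) set))"
proof
  fix e :: "('b + 'c) set" assume "e \<in> (`) Inl ` EF"
  then obtain u v where "e = {Inl u, Inl v}" "u \<in> VF" "v \<in> VF" "u \<noteq> v"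
    using EF_vpairs by (auto elim!: vpairsE)
  then show "e \<in> vpairs (Inl ` VF \<union> R)" by (auto intro: vpairsI)
qed

lemma hidden_subset: "hidden n VF EF \<subseteq> Kn_copies n"
proof
  fix E0 assume "E0 \<in> hidden n VF EF"
  then have E0: "E0 \<subseteq> vpairs {0..<n}"
    and iso: "graph_iso {0..<n} E0 (Inl ` VF \<union> Inr ` {0..<n - card VF}) ((`) Inl ` EF)"
    unfolding hidden_def by auto
  obtain h where h: "bij_betw h (Inl ` VF \<union> Inr ` {0..<n - card VF}) {0..<n}"
    and E0_eq: "E0 = (`) h ` (`) Inl ` EF"
    using graph_iso_imp_image[OF iso E0 Inl_EF_vpairs] by blast
  have "E0 = embed (h \<circ> Inl)"
    unfolding E0_eq embed_def image_image by (simp add: image_comp)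
  moreover have "inj_on h (Inl ` VF)"
    using bij_betw_imp_inj_on[OF h] by (rule inj_on_subset) blast
  then have "inj_on (h \<circ> Inl) VF" by (rule comp_inj_on[rotated]) (simp add: inj_on_def)
  moreover have "(h \<circ> Inl) ` VF \<subseteq> {0..<n}" using bij_betwE[OF h] by auto
  ultimately show "E0 \<in> Kn_copies n" unfolding Kn_copies_def by blast
qed

lemma Kn_copies_subset_hidden:
  assumes "card VF \<le> n"
  shows "Kn_copies n \<subseteq> hidden n VF EF"
proof
  fix D assume "D \<in> Kn_copies n"
  then obtain g where g: "D = embed g" "inj_on g VF" "g ` VF \<subseteq> {0..<n}"
    unfolding Kn_copies_def by blast
  let ?R = "{0..<n - card VF}"
  have "card ?R = card ({0..<n} - g ` VF)"
    using g assms finite_VF by (simp add: card_Diff_subset card_image)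
  then obtain k where k: "bij_betw k ?R ({0..<n} - g ` VF)"
    using finite_same_card_bij by blast
  define h where "h = case_sum g k"
  have "bij_betw h (Inl ` VF) (g ` VF)"
  proof (rule bij_betw_imageI)
    show "inj_on h (Inl ` VF)" using g(2) by (auto simp: inj_on_def h_def)
    show "h ` Inl ` VF = g ` VF" by (simp add: h_def image_image)
  qed
  moreover have "bij_betw h (Inr ` ?R) ({0..<n} - g ` VF)"
  proof (rule bij_betw_imageI)
    show "inj_on h (Inr ` ?R)"
      using bij_betw_imp_inj_on[OF k] by (auto simp: inj_on_def h_def)
    show "h ` Inr ` ?R = {0..<n} - g ` VF"
      using bij_betw_imp_surj_on[OF k] by (simp add: h_def image_image)
  qed
  ultimately have "bij_betw h (Inl ` VF \<union> Inr ` ?R) (g ` VF \<union> ({0..<n} - g ` VF))"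
    by (rule bij_betw_combine) blast
  then have h: "bij_betw h (Inl ` VF \<union> Inr ` ?R) {0..<n}"
    using g(3) by (simp add: Un_Diff_cancel Un_absorb1)
  have "D = (`) h ` (`) Inl ` EF"
    unfolding g(1) embed_def image_image by (simp add: h_def image_comp)
  then have "graph_iso {0..<n} D (Inl ` VF \<union> Inr ` ?R) ((`) Inl ` EF)"
    using graph_iso_image[OF h Inl_EF_vpairs] by simp
  then show "D \<in> hidden n VF EF"
    unfolding hidden_def using Kn_copies_vpairs \<open>D \<in> Kn_copies n\<close> by blast
qed

lemma hidden_eq: "card VF \<le> n \<Longrightarrow> hidden n VF EF = Kn_copies n"
  using hidden_subset Kn_copies_subset_hidden by blast

end

section \<open>Decision trees\<close>

definition solvable :: "nat \<Rightarrow> nat \<Rightarrow> nat set set set \<Rightarrow> bool" where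
  "solvable n k C \<longleftrightarrow> (\<exists>T. solves n T C \<and> (\<forall>E\<in>C. cost T E \<le> k))"

lemma Lgame_eq: "Lgame n VF EF = (LEAST k. solvable n k (hidden n VF EF))"
  unfolding Lgame_def solvable_def ..

lemma solves_subset: "solves n T C \<Longrightarrow> C' \<subseteq> C \<Longrightarrow> solves n T C'"
proof (induction T arbitrary: C C')
  case (Ask e T1 T2)
  have "{E \<in> C'. e \<in> E} \<subseteq> {E \<in> C. e \<in> E}" "{E \<in> C'. e \<notin> E} \<subseteq> {E \<in> C. e \<notin> E}"
    using Ask.prems by auto
  then show ?case using Ask by auto
qed auto

lemma solvable_mono: "solvable n k C \<Longrightarrow> k \<le> k' \<Longrightarrow> C' \<subseteq> C \<Longrightarrow> solvable n k' C'"
  unfolding solvable_def by (meson order_trans solves_subset subsetD)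

lemma solvable_determined: "\<forall>A\<in>C. \<forall>B\<in>C. A = B \<Longrightarrow> solvable n k C"
  unfolding solvable_def by (rule exI[of _ Done]) auto

lemma solvable_Ask:
  assumes "e \<in> vpairs {0..<n}" "solvable n k {E \<in> C. e \<in> E}" "solvable n k {E \<in> C. e \<notin> E}"
  shows "solvable n (Suc k) C"
proof -
  obtain T1 T2 where "solves n T1 {E \<in> C. e \<in> E}" "\<forall>E\<in>{E \<in> C. e \<in> E}. cost T1 E \<le> k"
    "solves n T2 {E \<in> C. e \<notin> E}" "\<forall>E\<in>{E \<in> C. e \<notin> E}. cost T2 E \<le> k"
    using assms(2,3) unfolding solvable_def by blast
  then show ?thesis
    unfolding solvable_def using assms(1) by (intro exI[of _ "Ask e T1 T2"]) auto
qed

lemma solvable_query_all: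
  assumes "finite Q" "Q \<subseteq> vpairs {0..<n}" "\<And>Y. solvable n k {E \<in> C. E \<inter> Q = Y}"
  shows "solvable n (card Q + k) C"
  using assms
proof (induction Q arbitrary: C rule: finite_induct)
  case empty
  then show ?case using empty.prems(2)[of "{}"] by simp
next
  case (insert q Q)
  have "solvable n (card Q + k) {E \<in> C. q \<in> E}"
  proof (rule insert.IH)
    show "solvable n k {E \<in> {E \<in> C. q \<in> E}. E \<inter> Q = Y}" for Y
      using insert.hyps(2) by (intro solvable_mono[OF insert.prems(2)[of "insert q Y"]]) auto
  qed (use insert.prems in auto)
  moreover have "solvable n (card Q + k) {E \<in> C. q \<notin> E}"
  proof (rule insert.IH)
    show "solvable n k {E \<in> {E \<in> C. q \<notin> E}. E \<inter> Q = Y}" for Y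
      by (intro solvable_mono[OF insert.prems(2)[of Y]]) auto
  qed (use insert.prems in auto)
  ultimately show ?case
    using solvable_Ask[of q n "card Q + k" C] insert.prems(1) insert.hyps by simp
qed

lemma solvable_query_until_yes:
  assumes "finite Q" "Q \<subseteq> vpairs {0..<n}" "solvable n k {E \<in> C. E \<inter> Q = {}}"
    and "\<And>q. q \<in> Q \<Longrightarrow> solvable n k {E \<in> C. q \<in> E}"
  shows "solvable n (card Q + k) C"
  using assms
proof (induction Q arbitrary: C rule: finite_induct)
  case (insert q Q)
  have "solvable n (card Q + k) {E \<in> C. q \<in> E}"
    by (rule solvable_mono[OF insert.prems(3)]) auto
  moreover have "solvable n (card Q + k) {E \<in> C. q \<notin> E}"
  proof (rule insert.IH)
    show "solvable n k {E \<in> {E \<in> C. q \<notin> E}. E \<inter> Q = {}}"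
      by (rule solvable_mono[OF insert.prems(2)]) auto
    show "solvable n k {E \<in> {E \<in> C. q \<notin> E}. q' \<in> E}" if "q' \<in> Q" for q'
      using that by (intro solvable_mono[OF insert.prems(3)[of q']]) auto
  qed (use insert.prems in auto)
  ultimately show ?case
    using solvable_Ask[of q n "card Q + k" C] insert.prems(1) insert.hyps by simp
qed simp

text \<open>The adversary answers NO whenever some consistent edge set allows it.\<close>
lemma solves_adversary:
  assumes "solves n T C" "C \<noteq> {}"
  shows "\<exists>E0 N. N \<subseteq> vpairs {0..<n} \<and> card N \<le> cost T E0 \<and> {E \<in> C. E \<inter> N = {}} = {E0}"
  using assms
proof (induction T arbitrary: C)
  case Done
  then obtain E0 where "C = {E0}" by auto
  then show ?case by (intro exI[of _ E0] exI[of _ "{}"]) simp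
next
  case (Ask e T1 T2)
  show ?case
  proof (cases "\<forall>E\<in>C. e \<in> E")
    case True
    then have "{E \<in> C. e \<in> E} = C" by blast
    moreover have "solves n T1 {E \<in> C. e \<in> E}" using Ask.prems(1) by simp
    ultimately have "solves n T1 C" by (simp only:)
    obtain E0 N where N: "N \<subseteq> vpairs {0..<n}" "card N \<le> cost T1 E0"
      and E0: "{E \<in> C. E \<inter> N = {}} = {E0}"
      using Ask.IH(1)[OF \<open>solves n T1 C\<close> Ask.prems(2)] by (elim exE conjE)
    have "E0 \<in> C" using E0 by blast
    then have cost: "card N \<le> cost (Ask e T1 T2) E0" using True N(2) by simp
    show ?thesis by (intro exI[of _ E0] exI[of _ N] conjI N(1) E0 cost)
  next
    case False
    then have T2: "solves n T2 {E \<in> C. e \<notin> E}" "{E \<in> C. e \<notin> E} \<noteq> {}"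
      and e: "e \<in> vpairs {0..<n}"
      using Ask.prems by auto
    obtain E0 N where N: "N \<subseteq> vpairs {0..<n}" "card N \<le> cost T2 E0"
      and E0: "{E \<in> {E \<in> C. e \<notin> E}. E \<inter> N = {}} = {E0}"
      using Ask.IH(2)[OF T2] by (elim exE conjE)
    have unique: "{E \<in> C. E \<inter> insert e N = {}} = {E0}" using E0 by blast
    have "e \<notin> E0" using E0 by blast
    moreover have "finite N" by (rule finite_subset_vpairs[OF finite_atLeastLessThan N(1)])
    ultimately have cost: "card (insert e N) \<le> cost (Ask e T1 T2) E0"
      using N(2) by (simp add: card_insert_if)
    have "insert e N \<subseteq> vpairs {0..<n}" using N(1) e by blast
    then show ?thesis by (intro exI[of _ E0] exI[of _ "insert e N"] conjI unique cost)
  qed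
qed

lemma solvable_component_known:
  assumes "\<forall>E\<in>C. E \<subseteq> vpairs {0..<n} \<and> a \<in> \<Union>E \<and> graph_connected (\<Union>E) E
      \<and> E \<inter> incident K = D0"
    and "\<Union>D0 \<subseteq> K" "a \<in> K"
  shows "solvable n k C"
proof (rule solvable_determined)
  have "E = D0" if "E \<in> C" for E
  proof -
    have E: "E \<subseteq> vpairs {0..<n}" "a \<in> \<Union>E" "graph_connected (\<Union>E) E" "E \<inter> incident K = D0"
      using assms(1) that by blast+
    have "E \<subseteq> incident K"
      by (rule connected_edges_incident[OF E(3,2) assms(3) _ E(1)]) (use E(4) assms(2) in simp)
    then show "E = D0" using E(4) by blast
  qed
  then show "\<forall>A\<in>C. \<forall>B\<in>C. A = B" by blast
qed

text \<open>Exploring the component of a known vertex \<open>a\<close>: once the edges at every vertex of \<open>K\<close>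
  are known, either the component is exhausted or it has a vertex outside \<open>K\<close>, all of whose
  at most \<open>n\<close> pairs are then queried.\<close>
lemma solvable_explore:
  assumes "\<forall>E\<in>C. E \<subseteq> vpairs {0..<n} \<and> card (\<Union>E) \<le> v \<and> a \<in> \<Union>E \<and> graph_connected (\<Union>E) E
      \<and> K \<subseteq> \<Union>E"
    and "\<forall>E\<in>C. \<forall>E'\<in>C. E \<inter> incident K = E' \<inter> incident K"
  shows "solvable n ((v - card K) * n) C"
  using assms
proof (induction "v - card K" arbitrary: K C rule: less_induct)
  case less
  show ?case
  proof (cases "C = {}")
    case False
    then obtain E1 where E1: "E1 \<in> C" by blast
    define D0 where "D0 = E1 \<inter> incident K"
    have D0: "E \<inter> incident K = D0" if "E \<in> C" for E
      using less.prems(2) E1 that unfolding D0_def by blast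
    show ?thesis
    proof (cases "\<Union>D0 \<subseteq> K \<and> a \<in> K")
      case True
      have "\<forall>E\<in>C. E \<subseteq> vpairs {0..<n} \<and> a \<in> \<Union>E \<and> graph_connected (\<Union>E) E
          \<and> E \<inter> incident K = D0"
        using less.prems(1) D0 by blast
      then show ?thesis by (rule solvable_component_known) (use True in blast)+
    next
      case False
      then obtain x where x: "x \<in> \<Union>D0 \<union> {a}" "x \<notin> K" by blast
      have x_in: "x \<in> \<Union>E" if "E \<in> C" for E
        using x D0[OF that] less.prems(1) that by blast
      have "\<Union>E1 \<subseteq> {0..<n}" using less.prems(1) E1 vpairs_subset by blast
      then have fin: "finite (\<Union>E1)" by (rule finite_subset) simp
      have K: "insert x K \<subseteq> \<Union>E1" using less.prems(1) E1 x_in[OF E1] by blast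
      then have "card (insert x K) = Suc (card K)" using x(2) finite_subset[OF _ fin] by simp
      moreover have "card (insert x K) \<le> v" using card_mono[OF fin K] less.prems(1) E1 by fastforce
      ultimately have decrease: "v - card K = Suc (v - card (insert x K))" by simp
      then have cost: "card (pairs_at n x) + (v - card (insert x K)) * n \<le> (v - card K) * n"
        using card_pairs_at[of n x] by simp
      have "solvable n (card (pairs_at n x) + (v - card (insert x K)) * n) C"
      proof (rule solvable_query_all)
        fix Y
        show "solvable n ((v - card (insert x K)) * n) {E \<in> C. E \<inter> pairs_at n x = Y}"
        proof (rule less.hyps)
          show "v - card (insert x K) < v - card K" using decrease by simp
          have "E \<inter> incident (insert x K) = D0 \<union> Y" if "E \<in> C" "E \<inter> pairs_at n x = Y" for E
            using Int_incident_insert[of E n x K] D0[OF that(1)] less.prems(1) that by blast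
          then show "\<forall>E\<in>{E \<in> C. E \<inter> pairs_at n x = Y}. \<forall>E'\<in>{E \<in> C. E \<inter> pairs_at n x = Y}.
              E \<inter> incident (insert x K) = E' \<inter> incident (insert x K)"
            by auto
        qed (use less.prems(1) x_in in blast)
      qed (use finite_vpairs[of "{0..<n}"] in \<open>auto simp: pairs_at_def\<close>)
      then show ?thesis using cost by (rule solvable_mono) simp
    qed
  qed (blast intro: solvable_determined)
qed

section \<open>The game and the extremal numbers\<close>

lemma Max_card_subsets:
  assumes "finite P" "E \<subseteq> P" "Q E"
  shows "card E \<le> Max {card X | X. X \<subseteq> P \<and> Q X}"
    and "\<exists>G \<subseteq> P. Q G \<and> card G = Max {card X | X. X \<subseteq> P \<and> Q X}"
proof -
  let ?S = "{card X | X. X \<subseteq> P \<and> Q X}"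
  have "?S \<subseteq> card ` Pow P" by blast
  then have "finite ?S" using assms(1) finite_subset by blast
  moreover have "card E \<in> ?S" using assms(2,3) by blast
  ultimately show "card E \<le> Max ?S" by (rule Max_ge)
  have "Max ?S \<in> ?S" using \<open>finite ?S\<close> \<open>card E \<in> ?S\<close> by (intro Max_in) auto
  then show "\<exists>G \<subseteq> P. Q G \<and> card G = Max ?S" by auto
qed

context connected_pattern
begin

lemma exa1_ge:
  assumes "E \<subseteq> vpairs {0..<n}" "card {D \<in> Kn_copies n. D \<subseteq> E} = 1"
  shows "card E \<le> exa1 n VF EF"
  unfolding exa1_def card_copies
  by (rule Max_card_subsets(1)) (use assms in \<open>simp_all add: finite_vpairs\<close>)

lemma exa1_attained:
  assumes "card VF \<le> n"
  obtains G where "G \<subseteq> vpairs {0..<n}" "card {D \<in> Kn_copies n. D \<subseteq> G} = 1"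
    "card G = exa1 n VF EF"
proof -
  obtain D where D: "D \<in> Kn_copies n" using Kn_copy_in_block[OF assms] by blast
  have "{D' \<in> Kn_copies n. D' \<subseteq> D} = {D}" using Kn_copies_subset_eq D by blast
  then have "\<exists>G \<subseteq> vpairs {0..<n}. card {D \<in> Kn_copies n. D \<subseteq> G} = 1
      \<and> card G = Max {card E | E. E \<subseteq> vpairs {0..<n} \<and> card {D \<in> Kn_copies n. D \<subseteq> E} = 1}"
    by (intro Max_card_subsets(2)[OF _ Kn_copies_vpairs[OF D]]) (simp_all add: finite_vpairs)
  then show thesis using that unfolding exa1_def card_copies by blast
qed

lemma exa1_le_choose:
  assumes "card VF \<le> n"
  shows "exa1 n VF EF \<le> n choose 2"
proof -
  obtain G where G: "G \<subseteq> vpairs {0..<n}" "card G = exa1 n VF EF"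
    using exa1_attained[OF assms] by blast
  have "card G \<le> card (vpairs {0..<n})" using G(1) by (intro card_mono) (simp_all add: finite_vpairs)
  then show ?thesis using G(2) card_vpairs[of "{0..<n}"] by simp
qed

lemma ex_num_ge:
  assumes "E \<subseteq> vpairs {0..<n}" "\<forall>D\<in>Kn_copies n. \<not> D \<subseteq> E"
  shows "card E \<le> ex_num n VF EF"
  unfolding ex_num_def copies_eq
  by (rule Max_card_subsets(1)) (use assms in \<open>auto simp: finite_vpairs\<close>)

lemma ex_num_attained:
  obtains H where "H \<subseteq> vpairs {0..<n}" "\<forall>D\<in>Kn_copies n. \<not> D \<subseteq> H" "card H = ex_num n VF EF"
proof -
  have "{D \<in> Kn_copies n. D \<subseteq> {}} = {}" using Kn_copies_nonempty by blast
  then have "\<exists>H \<subseteq> vpairs {0..<n}. {D \<in> Kn_copies n. D \<subseteq> H} = {}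
      \<and> card H = Max {card E | E. E \<subseteq> vpairs {0..<n} \<and> {D \<in> Kn_copies n. D \<subseteq> E} = {}}"
    by (intro Max_card_subsets(2)[of _ "{}"]) (simp_all add: finite_vpairs)
  then show thesis using that unfolding ex_num_def copies_eq by auto
qed

lemma solvable_imp_ge:
  assumes "card VF \<le> n" "solvable n k (hidden n VF EF)"
  shows "n choose 2 \<le> k + exa1 n VF EF"
proof -
  have H: "hidden n VF EF = Kn_copies n" using hidden_eq assms(1) .
  obtain T where T: "solves n T (Kn_copies n)" "\<forall>E\<in>Kn_copies n. cost T E \<le> k"
    using assms(2) unfolding solvable_def H by blast
  obtain D0 where "D0 \<in> Kn_copies n" using Kn_copy_in_block[OF assms(1)] by blast
  then have "Kn_copies n \<noteq> {}" by blast
  obtain E0 N where N: "N \<subseteq> vpairs {0..<n}" "card N \<le> cost T E0"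
    and E0: "{E \<in> Kn_copies n. E \<inter> N = {}} = {E0}"
    using solves_adversary[OF T(1) \<open>Kn_copies n \<noteq> {}\<close>] by (elim exE conjE)
  define G where "G = vpairs {0..<n} - N"
  have "{D \<in> Kn_copies n. D \<subseteq> G} = {D \<in> Kn_copies n. D \<inter> N = {}}"
    using Kn_copies_vpairs unfolding G_def by blast
  then have "card G \<le> exa1 n VF EF" using E0 by (intro exa1_ge) (auto simp: G_def)
  moreover have "card G + card N = n choose 2"
    using card_vpairs[of "{0..<n}"] card_mono[OF finite_vpairs[OF finite_atLeastLessThan] N(1)]
      card_Diff_subset[OF finite_subset_vpairs[OF finite_atLeastLessThan N(1)] N(1)]
    by (simp add: G_def)
  moreover have "cost T E0 \<le> k" using T(2) E0 by blast
  ultimately show ?thesis using N(2) by linarith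
qed

lemma solvable_upper:
  assumes "card VF \<le> n"
  shows "solvable n ((n choose 2) - exa1 n VF EF + card VF * n) (hidden n VF EF)"
proof -
  have H: "hidden n VF EF = Kn_copies n" using hidden_eq assms .
  obtain G where G: "G \<subseteq> vpairs {0..<n}" "card {D \<in> Kn_copies n. D \<subseteq> G} = 1"
    "card G = exa1 n VF EF"
    using exa1_attained[OF assms] by blast
  obtain D1 where D1: "{D \<in> Kn_copies n. D \<subseteq> G} = {D1}" using G(2) card_1_singletonE by blast
  define Q where "Q = vpairs {0..<n} - G"
  have card_Q: "card Q = (n choose 2) - exa1 n VF EF"
    using G card_vpairs[of "{0..<n}"]
      card_Diff_subset[OF finite_subset_vpairs[OF finite_atLeastLessThan G(1)] G(1)]
    unfolding Q_def by simp
  have "solvable n (card Q + card VF * n) (Kn_copies n)"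
  proof (rule solvable_query_until_yes)
    show "finite Q" "Q \<subseteq> vpairs {0..<n}" unfolding Q_def by (auto simp: finite_vpairs)
    have "E = D1" if "E \<in> Kn_copies n" "E \<inter> Q = {}" for E
    proof -
      have "E \<subseteq> G" using Kn_copies_vpairs[OF that(1)] that(2) unfolding Q_def by blast
      then show ?thesis using D1 that(1) by blast
    qed
    then show "solvable n (card VF * n) {E \<in> Kn_copies n. E \<inter> Q = {}}"
      by (blast intro: solvable_determined)
    fix q assume "q \<in> Q"
    then obtain a b where q: "q = {a, b}" unfolding Q_def by (blast elim: vpairsE)
    have "solvable n ((card VF - card ({} :: nat set)) * n) {E \<in> Kn_copies n. q \<in> E}"
    proof (rule solvable_explore[where a = a])
      show "\<forall>E\<in>{E \<in> Kn_copies n. q \<in> E}. E \<subseteq> vpairs {0..<n} \<and> card (\<Union>E) \<le> card VF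
          \<and> a \<in> \<Union>E \<and> graph_connected (\<Union>E) E \<and> {} \<subseteq> \<Union>E"
      proof
        fix E assume "E \<in> {E \<in> Kn_copies n. q \<in> E}"
        then have E: "E \<in> Kn_copies n" "q \<in> E" by auto
        then show "E \<subseteq> vpairs {0..<n} \<and> card (\<Union>E) \<le> card VF \<and> a \<in> \<Union>E
            \<and> graph_connected (\<Union>E) E \<and> {} \<subseteq> \<Union>E"
          using Kn_copies_vpairs[OF E(1)] card_Union_Kn_copies[OF E(1)] Kn_copies_connected[OF E(1)] q
          by auto
      qed
    qed (simp add: incident_def)
    then show "solvable n (card VF * n) {E \<in> Kn_copies n. q \<in> E}" by simp
  qed
  then show ?thesis using card_Q H by simp
qed

lemma Lgame_exa1_bounds:
  assumes "card VF \<le> n"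
  shows "n choose 2 \<le> Lgame n VF EF + exa1 n VF EF"
    and "Lgame n VF EF + exa1 n VF EF \<le> (n choose 2) + card VF * n"
proof -
  have "solvable n (Lgame n VF EF) (hidden n VF EF)"
    unfolding Lgame_eq using solvable_upper[OF assms] by (rule LeastI)
  then show "n choose 2 \<le> Lgame n VF EF + exa1 n VF EF" by (rule solvable_imp_ge[OF assms])
  have "Lgame n VF EF \<le> (n choose 2) - exa1 n VF EF + card VF * n"
    unfolding Lgame_eq using solvable_upper[OF assms] by (rule Least_le)
  then show "Lgame n VF EF + exa1 n VF EF \<le> (n choose 2) + card VF * n"
    using exa1_le_choose[OF assms] by simp
qed

lemma exa1_le_ex_num:
  assumes "card VF \<le> n"
  shows "exa1 n VF EF \<le> ex_num n VF EF + 1"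
proof -
  obtain G where G: "G \<subseteq> vpairs {0..<n}" "card {D \<in> Kn_copies n. D \<subseteq> G} = 1"
    "card G = exa1 n VF EF"
    using exa1_attained[OF assms] by blast
  obtain D1 where D1: "{D \<in> Kn_copies n. D \<subseteq> G} = {D1}" using G(2) card_1_singletonE by blast
  then have "D1 \<in> Kn_copies n" "D1 \<subseteq> G" by blast+
  then obtain d where d: "d \<in> D1" "d \<in> G" using Kn_copies_nonempty[of D1 n] by blast
  have "\<forall>D\<in>Kn_copies n. \<not> D \<subseteq> G - {d}" using D1 d(1) by blast
  then have "card (G - {d}) \<le> ex_num n VF EF" using G(1) by (intro ex_num_ge) auto
  moreover have "card (G - {d}) = card G - 1" using d(2) by (rule card_Diff_singleton)
  ultimately show ?thesis using G(3) by linarith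
qed

text \<open>Any other copy would have to use an edge of \<open>D0\<close>; being connected, it could not leave \<open>B\<close>,
  where only the edges of \<open>D0\<close> remain.\<close>
lemma unique_planted_copy:
  assumes H: "\<forall>D\<in>Kn_copies n. \<not> D \<subseteq> H" and D0: "D0 \<in> Kn_copies n" "\<Union>D0 \<subseteq> B"
  shows "{D \<in> Kn_copies n. D \<subseteq> (H - incident B) \<union> D0} = {D0}"
proof -
  have "D = D0" if D: "D \<in> Kn_copies n" "D \<subseteq> (H - incident B) \<union> D0" for D
  proof -
    obtain e where "e \<in> D" "e \<notin> H" using H D(1) by blast
    then have "e \<in> D0" using D(2) by blast
    moreover obtain p where "p \<in> e" using \<open>e \<in> D0\<close> Kn_copies_vpairs[OF D0(1)] by (blast elim: vpairsE)
    ultimately have "p \<in> \<Union>D" "p \<in> B" using \<open>e \<in> D\<close> D0(2) by blast+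
    moreover have "\<Union>(D \<inter> incident B) \<subseteq> B" using D(2) D0(2) unfolding incident_def by blast
    ultimately have "D \<subseteq> incident B"
      using connected_edges_incident[OF Kn_copies_connected[OF D(1)]] Kn_copies_vpairs[OF D(1)] by blast
    then have "D \<subseteq> D0" using D(2) by blast
    then show "D = D0" using Kn_copies_subset_eq D(1) D0(1) by blast
  qed
  moreover have "D0 \<in> {D \<in> Kn_copies n. D \<subseteq> (H - incident B) \<union> D0}" using D0 by blast
  ultimately show ?thesis by blast
qed

lemma ex_num_le_exa1:
  assumes "card VF \<le> n"
  shows "ex_num n VF EF \<le> exa1 n VF EF + card VF * n"
proof -
  obtain H where H: "H \<subseteq> vpairs {0..<n}" "\<forall>D\<in>Kn_copies n. \<not> D \<subseteq> H" "card H = ex_num n VF EF"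
    using ex_num_attained by blast
  define B where "B = {n - card VF..<n}"
  obtain D0 where D0: "D0 \<in> Kn_copies n" "\<Union>D0 \<subseteq> B"
    using Kn_copy_in_block[OF assms] unfolding B_def by blast
  define G where "G = (H - incident B) \<union> D0"
  have "card G \<le> exa1 n VF EF"
    using unique_planted_copy[OF H(2) D0] H(1) Kn_copies_vpairs[OF D0(1)]
    by (intro exa1_ge) (auto simp: G_def)
  moreover have "card (H - incident B) \<le> card G"
    unfolding G_def using finite_subset_vpairs[OF finite_atLeastLessThan H(1)]
      finite_subset_vpairs[OF finite_atLeastLessThan Kn_copies_vpairs[OF D0(1)]]
    by (intro card_mono) auto
  moreover have "card (H \<inter> incident B) \<le> card VF * n"
  proof -
    have "card (H \<inter> incident B) \<le> card (vpairs {0..<n} \<inter> incident B)"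
      using H(1) by (intro card_mono) (auto simp: finite_vpairs)
    also have "\<dots> \<le> card B * n" by (rule card_vpairs_incident) (simp add: B_def)
    finally show ?thesis using assms by (simp add: B_def)
  qed
  moreover have "card H \<le> card (H - incident B) + card (H \<inter> incident B)"
    using card_Un_le[of "H - incident B" "H \<inter> incident B"] by (simp add: Un_Diff_Int)
  ultimately show ?thesis using H(3) by linarith
qed

end

section \<open>Dense graphs without cycles of a given length\<close>

lemma card_supersets:
  assumes P: "finite P" and Z: "Z \<subseteq> P" "card Z \<le> m"
  shows "card {G. G \<subseteq> P \<and> card G = m \<and> Z \<subseteq> G} = (card P - card Z) choose (m - card Z)"
proof -
  have fZ: "finite Z" using P Z(1) finite_subset by blast
  have "{G. G \<subseteq> P \<and> card G = m \<and> Z \<subseteq> G}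
      = (\<lambda>G'. G' \<union> Z) ` {G'. G' \<subseteq> P - Z \<and> card G' = m - card Z}"
  proof (intro equalityI subsetI)
    fix G assume G: "G \<in> {G. G \<subseteq> P \<and> card G = m \<and> Z \<subseteq> G}"
    then have "G = (G - Z) \<union> Z" "card (G - Z) = m - card Z" "G - Z \<subseteq> P - Z"
      using card_Diff_subset[OF fZ] by auto
    then show "G \<in> (\<lambda>G'. G' \<union> Z) ` {G'. G' \<subseteq> P - Z \<and> card G' = m - card Z}" by blast
  next
    fix G assume "G \<in> (\<lambda>G'. G' \<union> Z) ` {G'. G' \<subseteq> P - Z \<and> card G' = m - card Z}"
    then obtain G' where G': "G = G' \<union> Z" "G' \<subseteq> P - Z" "card G' = m - card Z" by blast
    then have "card G = m"
      using card_Un_disjoint[OF finite_subset[OF _ P] fZ, of G'] Z(2) by auto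
    then show "G \<in> {G. G \<subseteq> P \<and> card G = m \<and> Z \<subseteq> G}" using G' Z(1) by blast
  qed
  moreover have "inj_on (\<lambda>G'. G' \<union> Z) {G'. G' \<subseteq> P - Z \<and> card G' = m - card Z}"
    by (rule inj_onI) blast
  ultimately have "card {G. G \<subseteq> P \<and> card G = m \<and> Z \<subseteq> G} = card (P - Z) choose (m - card Z)"
    using P by (simp add: card_image n_subsets)
  then show ?thesis using card_Diff_subset[OF fZ Z(1)] by simp
qed

lemma choose_pred_mult_le:
  fixes a b m M :: nat
  assumes "0 < b" "b \<le> a" "b * M \<le> a * m"
  shows "((a - 1) choose (b - 1)) * M \<le> (a choose b) * m"
proof -
  have "a * (((a - 1) choose (b - 1)) * M) = (b * (a choose b)) * M"
    using times_binomial_minus1_eq[OF assms(1)] by simp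
  also have "\<dots> = (a choose b) * (b * M)" by simp
  also have "\<dots> \<le> (a choose b) * (a * m)" using assms(3) by simp
  also have "\<dots> = a * ((a choose b) * m)" by simp
  finally show ?thesis using assms(1,2) by simp
qed

lemma choose_mult_power_le:
  "l \<le> m \<Longrightarrow> m \<le> M \<Longrightarrow> ((M - l) choose (m - l)) * M ^ l \<le> (M choose m) * m ^ l"
proof (induction l)
  case (Suc l)
  define a where "a = M - l"
  define b where "b = m - l"
  have ab: "0 < b" "b \<le> a" "M - Suc l = a - 1" "m - Suc l = b - 1"
    using Suc.prems unfolding a_def b_def by simp_all
  have "(m - l) * M = m * M - l * M" by (simp add: diff_mult_distrib)
  also have "\<dots> \<le> m * M - l * m" by (rule diff_le_mono2) (use Suc.prems in simp)
  also have "\<dots> = (M - l) * m" by (simp add: diff_mult_distrib mult.commute[of M m])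
  finally have "b * M \<le> a * m" unfolding a_def b_def .
  then have step: "((a - 1) choose (b - 1)) * M \<le> (a choose b) * m"
    using ab(1,2) by (intro choose_pred_mult_le)
  have "((M - Suc l) choose (m - Suc l)) * M ^ Suc l = (((a - 1) choose (b - 1)) * M) * M ^ l"
    using ab(3,4) by simp
  also have "\<dots> \<le> ((a choose b) * m) * M ^ l" using step by simp
  also have "\<dots> = m * ((a choose b) * M ^ l)" by simp
  also have "\<dots> \<le> m * ((M choose m) * m ^ l)" using Suc unfolding a_def b_def by simp
  also have "\<dots> = (M choose m) * m ^ Suc l" by simp
  finally show ?case .
qed simp

lemma sum_card_contained:
  assumes P: "finite P" and Zs: "finite Zs" "\<forall>Z\<in>Zs. Z \<subseteq> P \<and> card Z = l" and "l \<le> m"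
  shows "(\<Sum>G\<in>{G. G \<subseteq> P \<and> card G = m}. card {Z \<in> Zs. Z \<subseteq> G})
    = ((card P - l) choose (m - l)) * card Zs"
proof (rule sum_multicount)
  show "\<forall>Z\<in>Zs. card {G \<in> {G. G \<subseteq> P \<and> card G = m}. Z \<subseteq> G} = (card P - l) choose (m - l)"
    using card_supersets[OF P] Zs(2) \<open>l \<le> m\<close> by (simp add: conj_assoc)
qed (use assms in simp_all)

text \<open>First moment method: the right-hand side bounds the average over all \<open>m\<close>-subsets of \<open>P\<close>.\<close>
lemma exists_subset_few_contained:
  assumes P: "finite P" and Zs: "finite Zs" "\<forall>Z\<in>Zs. Z \<subseteq> P \<and> card Z = l"
    and "l \<le> m" "m \<le> card P"
  shows "\<exists>G \<subseteq> P. card G = m \<and> card {Z \<in> Zs. Z \<subseteq> G} * card P ^ l \<le> card Zs * m ^ l"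
proof -
  define Gs where "Gs = {G. G \<subseteq> P \<and> card G = m}"
  define f where "f G = card {Z \<in> Zs. Z \<subseteq> G}" for G
  have card_Gs: "card Gs = card P choose m" unfolding Gs_def by (rule n_subsets[OF P])
  then have pos: "0 < card Gs" using \<open>m \<le> card P\<close> by simp
  then have fin: "finite Gs" and ne: "Gs \<noteq> {}" using card_gt_0_iff by blast+
  have "Min (f ` Gs) \<in> f ` Gs" by (rule Min_in[OF finite_imageI[OF fin]]) (use ne in simp)
  then obtain G where G: "Min (f ` Gs) = f G" "G \<in> Gs" by (rule imageE)
  have "f G \<le> f G'" if "G' \<in> Gs" for G'
    unfolding G(1)[symmetric] by (rule Min_le[OF finite_imageI[OF fin] imageI[OF that]])
  then have "card Gs * f G \<le> (\<Sum>G'\<in>Gs. f G')"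
    using sum_bounded_below[of Gs "f G" f] by simp
  also have "\<dots> = ((card P - l) choose (m - l)) * card Zs"
    unfolding Gs_def f_def by (rule sum_card_contained) (use assms in auto)
  finally have avg: "card Gs * f G \<le> ((card P - l) choose (m - l)) * card Zs" .
  have "card Gs * (f G * card P ^ l) \<le> card Zs * (((card P - l) choose (m - l)) * card P ^ l)"
    using mult_le_mono1[OF avg, of "card P ^ l"] by (simp add: ac_simps)
  also have "\<dots> \<le> card Zs * ((card P choose m) * m ^ l)"
    using choose_mult_power_le[OF \<open>l \<le> m\<close> \<open>m \<le> card P\<close>] by simp
  also have "\<dots> = card Gs * (card Zs * m ^ l)" using card_Gs by (simp add: ac_simps)
  finally have "f G * card P ^ l \<le> card Zs * m ^ l" using pos by simp
  then show ?thesis using G(2) unfolding Gs_def f_def by blast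
qed

lemma exists_subset_hitting:
  assumes "finite Zs" "{} \<notin> Zs"
  shows "\<exists>H \<subseteq> G. card G - card {Z \<in> Zs. Z \<subseteq> G} \<le> card H \<and> (\<forall>Z\<in>Zs. \<not> Z \<subseteq> H)"
proof -
  define S where "S = (\<lambda>Z. SOME e. e \<in> Z) ` {Z \<in> Zs. Z \<subseteq> G}"
  have S: "card S \<le> card {Z \<in> Zs. Z \<subseteq> G}" "finite S"
    unfolding S_def using assms(1) by (auto intro: card_image_le)
  have "(SOME e. e \<in> Z) \<in> Z" if "Z \<in> Zs" for Z
    using assms(2) that by (metis ex_in_conv someI_ex)
  then have "\<not> Z \<subseteq> G - S" if "Z \<in> Zs" for Z
    using that unfolding S_def by blast
  moreover have "card G - card S \<le> card (G - S)" by (rule diff_card_le_card_Diff[OF S(2)])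
  ultimately show ?thesis using S(1) by (intro exI[of _ "G - S"]) auto
qed

definition cycle_edges :: "nat \<Rightarrow> (nat \<Rightarrow> 'a) \<Rightarrow> 'a set set" where
  "cycle_edges L c = (\<lambda>i. {c i, c (Suc i mod L)}) ` {0..<L}"

definition Kn_cycles :: "nat \<Rightarrow> nat \<Rightarrow> nat set set set" where
  "Kn_cycles n L = cycle_edges L ` {c \<in> {0..<L} \<rightarrow>\<^sub>E {0..<n}. inj_on c {0..<L}}"

lemma cycle_edges_vpairs:
  assumes "3 \<le> L" "inj_on c {0..<L}" "c ` {0..<L} \<subseteq> V"
  shows "cycle_edges L c \<subseteq> vpairs V"
proof
  fix e assume "e \<in> cycle_edges L c"
  then obtain i where i: "i < L" "e = {c i, c (Suc i mod L)}" unfolding cycle_edges_def by auto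
  moreover have "Suc i mod L < L" "i \<noteq> Suc i mod L" using assms(1) i(1) by (auto simp: mod_Suc)
  ultimately show "e \<in> vpairs V"
    using assms(2,3) by (auto intro!: vpairsI simp: inj_on_eq_iff)
qed

lemma card_cycle_edges:
  assumes "3 \<le> L" "inj_on c {0..<L}"
  shows "card (cycle_edges L c) = L"
proof -
  have "inj_on (\<lambda>i. {c i, c (Suc i mod L)}) {0..<L}"
  proof (rule inj_onI)
    fix i j assume ij: "i \<in> {0..<L}" "j \<in> {0..<L}" and eq: "{c i, c (Suc i mod L)} = {c j, c (Suc j mod L)}"
    have "Suc i mod L < L" "Suc j mod L < L" using assms(1) by auto
    then have "(i = j \<and> Suc i mod L = Suc j mod L) \<or> (i = Suc j mod L \<and> Suc i mod L = j)"
      using eq ij assms(2) by (auto simp: doubleton_eq_iff inj_on_eq_iff)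
    then show "i = j" using assms(1) ij by (auto simp: mod_Suc split: if_splits)
  qed
  then show ?thesis unfolding cycle_edges_def by (simp add: card_image)
qed

lemma finite_Kn_cycles: "finite (Kn_cycles n L)"
  unfolding Kn_cycles_def
  by (rule finite_imageI, rule finite_subset[of _ "{0..<L} \<rightarrow>\<^sub>E {0..<n}"]) (auto intro: finite_PiE)

lemma card_Kn_cycles: "card (Kn_cycles n L) \<le> n ^ L"
proof -
  have "card (Kn_cycles n L) \<le> card {c \<in> {0..<L} \<rightarrow>\<^sub>E {0..<n}. inj_on c {0..<L}}"
    unfolding Kn_cycles_def
    by (rule card_image_le, rule finite_subset[of _ "{0..<L} \<rightarrow>\<^sub>E {0..<n}"]) (auto intro: finite_PiE)
  also have "\<dots> \<le> card ({0..<L} \<rightarrow>\<^sub>E {0..<n})" by (rule card_mono) (auto intro: finite_PiE)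
  also have "\<dots> = n ^ L" by (simp add: card_PiE)
  finally show ?thesis .
qed

lemma Kn_cycles_vpairs_card:
  assumes "3 \<le> L" "Z \<in> Kn_cycles n L"
  shows "Z \<subseteq> vpairs {0..<n} \<and> card Z = L"
proof -
  obtain c where c: "c \<in> {0..<L} \<rightarrow>\<^sub>E {0..<n}" "inj_on c {0..<L}" "Z = cycle_edges L c"
    using assms(2) unfolding Kn_cycles_def by blast
  then have "c ` {0..<L} \<subseteq> {0..<n}" by auto
  then show ?thesis
    using cycle_edges_vpairs[OF assms(1) c(2)] card_cycle_edges[OF assms(1) c(2)] c(3) by simp
qed

lemma large_n_bounds:
  fixes d L n :: nat
  assumes L: "3 \<le> L" and d: "1 \<le> d" and n: "(8 * d) ^ L \<le> n"
  shows "L \<le> 2 * d * n" and "2 * d * n \<le> n choose 2" and "n * (2 * d * n) \<le> 8 * d * (n choose 2)"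
proof -
  have "8 * d \<le> (8 * d) ^ L" using L d by (intro self_le_power) auto
  then have n8: "8 * d \<le> n" using n by linarith
  have "L < 2 ^ L" by (rule less_exp)
  also have "\<dots> \<le> (8 * d) ^ L" using d by (intro power_mono) auto
  also have "\<dots> \<le> 2 * d * n"
  proof -
    have "1 * n \<le> (2 * d) * n" using d by (intro mult_le_mono1) simp
    then have "n \<le> 2 * d * n" by simp
    then show ?thesis using n by linarith
  qed
  finally show "L \<le> 2 * d * n" by simp
  have M2: "n * (n - 1) = 2 * (n choose 2)" using times_binomial_minus1_eq[of 2 n] by simp
  have "2 * (2 * d * n) = n * (4 * d)" by simp
  also have "\<dots> \<le> n * (n - 1)" using n8 d by (intro mult_le_mono2) linarith
  also have "\<dots> = 2 * (n choose 2)" by (rule M2)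
  finally show "2 * d * n \<le> n choose 2" by simp
  have "n * n \<le> n * (2 * (n - 1))" using n8 d by (intro mult_le_mono2) linarith
  then have "n * n \<le> 4 * (n choose 2)" using M2 by (simp only: mult.left_commute[of n 2])
  then have "4 * (n * (2 * d * n)) \<le> 4 * (8 * d * (n choose 2))" by simp
  then show "n * (2 * d * n) \<le> 8 * d * (n choose 2)" by (simp add: ac_simps)
qed

lemma exists_graph_few_cycles:
  assumes L: "3 \<le> L" and d: "1 \<le> d" and n: "(8 * d) ^ L \<le> n"
  shows "\<exists>G \<subseteq> vpairs {0..<n}. card G = 2 * d * n \<and> card {Z \<in> Kn_cycles n L. Z \<subseteq> G} \<le> (8 * d) ^ L"
proof -
  define M where "M = card (vpairs {0..<n})"
  define m where "m = 2 * d * n"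
  have M: "M = n choose 2" unfolding M_def using card_vpairs[of "{0..<n}"] by simp
  have Lm: "L \<le> m" and mM: "m \<le> M" and nM: "n * m \<le> 8 * d * M"
    using large_n_bounds[OF assms] unfolding m_def M by simp_all
  obtain G where G: "G \<subseteq> vpairs {0..<n}" "card G = m"
    and few: "card {Z \<in> Kn_cycles n L. Z \<subseteq> G} * M ^ L \<le> card (Kn_cycles n L) * m ^ L"
    using exists_subset_few_contained[of "vpairs {0..<n}" "Kn_cycles n L" L m]
      Kn_cycles_vpairs_card[OF L] finite_Kn_cycles Lm mM unfolding M_def by (auto simp: finite_vpairs)
  define X where "X = card {Z \<in> Kn_cycles n L. Z \<subseteq> G}"
  have "X * M ^ L \<le> n ^ L * m ^ L"
    using few card_Kn_cycles[of n L] unfolding X_def by (meson le_trans mult_le_mono1)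
  also have "\<dots> = (n * m) ^ L" by (simp add: power_mult_distrib)
  also have "\<dots> \<le> (8 * d * M) ^ L" using nM by (rule power_mono) simp
  also have "\<dots> = (8 * d) ^ L * M ^ L" by (simp add: power_mult_distrib)
  finally have "X * M ^ L \<le> (8 * d) ^ L * M ^ L" .
  moreover have "0 < M" using Lm mM L by linarith
  ultimately have "X \<le> (8 * d) ^ L" by simp
  then show ?thesis using G unfolding X_def m_def by blast
qed

lemma exists_cycle_free_graph:
  assumes L: "3 \<le> L" and d: "1 \<le> d" and n: "(8 * d) ^ L \<le> n"
  shows "\<exists>H \<subseteq> vpairs {0..<n}. d * n \<le> card H \<and> (\<forall>Z\<in>Kn_cycles n L. \<not> Z \<subseteq> H)"
proof -
  obtain G where G: "G \<subseteq> vpairs {0..<n}" "card G = 2 * d * n"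
    and few: "card {Z \<in> Kn_cycles n L. Z \<subseteq> G} \<le> (8 * d) ^ L"
    using exists_graph_few_cycles[OF assms] by blast
  have no_empty: "{} \<notin> Kn_cycles n L"
  proof
    assume "{} \<in> Kn_cycles n L"
    then show False using Kn_cycles_vpairs_card[OF L] L by force
  qed
  obtain H where H: "H \<subseteq> G" "card G - card {Z \<in> Kn_cycles n L. Z \<subseteq> G} \<le> card H"
    and free: "\<forall>Z\<in>Kn_cycles n L. \<not> Z \<subseteq> H"
    using exists_subset_hitting[OF finite_Kn_cycles no_empty, where G = G] by (elim exE conjE)
  have "(8 * d) ^ L \<le> d * n" using n d by (metis le_trans mult_1 mult_le_mono1)
  then have "d * n \<le> card H" using H(2) G(2) few by simp
  then show ?thesis using H(1) G(1) free by blast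
qed

section \<open>Asymptotics\<close>

lemma eventually_eq_one_plus_vanishing:
  fixes a b :: "nat \<Rightarrow> real"
  assumes superlinear: "\<And>d. \<forall>\<^sub>F n in sequentially. d * real n \<le> b n"
    and close: "\<forall>\<^sub>F n in sequentially. \<bar>a n - b n\<bar> \<le> C * real n"
  shows "\<exists>g. g \<longlonglongrightarrow> 0 \<and> (\<forall>\<^sub>F n in sequentially. a n = (1 + g n) * b n)"
proof -
  define g where "g n = (a n - b n) / b n" for n
  have pos: "\<forall>\<^sub>F n in sequentially. 0 < b n"
    using eventually_conj[OF superlinear[of 1] eventually_gt_at_top[of 0]]
    by (rule eventually_mono) auto
  have "\<forall>\<^sub>F n in sequentially. a n = (1 + g n) * b n"
    using pos by (rule eventually_mono) (simp add: g_def field_simps)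
  moreover have "g \<longlonglongrightarrow> 0"
  proof (rule tendstoI)
    fix e :: real assume e: "0 < e"
    have "\<forall>\<^sub>F n in sequentially. (\<bar>C\<bar> + 1) / e * real n \<le> b n \<and> \<bar>a n - b n\<bar> \<le> C * real n
        \<and> 0 < n \<and> 0 < b n"
      by (rule eventually_conj[OF superlinear eventually_conj[OF close
            eventually_conj[OF eventually_gt_at_top pos]]])
    then show "\<forall>\<^sub>F n in sequentially. dist (g n) 0 < e"
    proof (rule eventually_mono)
      fix n assume n: "(\<bar>C\<bar> + 1) / e * real n \<le> b n \<and> \<bar>a n - b n\<bar> \<le> C * real n \<and> 0 < n \<and> 0 < b n"
      then have "\<bar>a n - b n\<bar> \<le> \<bar>C\<bar> * real n"
        using mult_right_mono[OF abs_ge_self[of C], of "real n"] by linarith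
      also have "\<dots> < (\<bar>C\<bar> + 1) * real n" using n by (simp add: distrib_right)
      also have "\<dots> = e * ((\<bar>C\<bar> + 1) / e * real n)" using e by simp
      also have "\<dots> \<le> e * b n" using n e by (intro mult_left_mono) auto
      finally have "\<bar>a n - b n\<bar> / b n < e" using n by (simp add: pos_divide_less_eq mult.commute)
      then show "dist (g n) 0 < e" using n by (simp add: g_def abs_divide)
    qed
  qed
  ultimately show ?thesis by blast
qed

context connected_pattern
begin

lemma Kn_copy_contains_cycle:
  assumes cycle: "3 \<le> length vs" "distinct vs" "set vs \<subseteq> VF"
      "\<forall>i < length vs. {vs ! i, vs ! ((i + 1) mod length vs)} \<in> EF"
    and D: "D \<in> Kn_copies n"
  shows "\<exists>Z\<in>Kn_cycles n (length vs). Z \<subseteq> D"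
proof -
  let ?L = "length vs"
  obtain g where g: "D = embed g" "inj_on g VF" "g ` VF \<subseteq> {0..<n}"
    using D unfolding Kn_copies_def by blast
  define c where "c = restrict (\<lambda>i. g (vs ! i)) {0..<?L}"
  have vs: "vs ! i \<in> VF" if "i < ?L" for i using cycle(3) that by auto
  have "c \<in> {0..<?L} \<rightarrow>\<^sub>E {0..<n}" unfolding c_def using g(3) vs by auto
  moreover have "inj_on c {0..<?L}"
    using g(2) vs cycle(2) by (auto simp: inj_on_def c_def inj_on_eq_iff nth_eq_iff_index_eq)
  ultimately have "cycle_edges ?L c \<in> Kn_cycles n ?L" unfolding Kn_cycles_def by blast
  moreover have "cycle_edges ?L c \<subseteq> D"
  proof
    fix e assume "e \<in> cycle_edges ?L c"
    then obtain i where i: "i < ?L" "e = {c i, c (Suc i mod ?L)}" unfolding cycle_edges_def by auto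
    have "Suc i mod ?L < ?L" using cycle(1) by (intro mod_less_divisor) linarith
    then have "e = g ` {vs ! i, vs ! (Suc i mod ?L)}" using i unfolding c_def by simp
    moreover have "{vs ! i, vs ! (Suc i mod ?L)} \<in> EF" using cycle(4) i(1) by simp
    ultimately show "e \<in> D" unfolding g(1) embed_def by blast
  qed
  ultimately show ?thesis by blast
qed

lemma ex_num_superlinear:
  assumes "has_cycle VF EF"
  shows "\<forall>\<^sub>F n in sequentially. d * real n \<le> real (ex_num n VF EF)"
proof -
  obtain vs where cycle: "3 \<le> length vs" "distinct vs" "set vs \<subseteq> VF"
      "\<forall>i < length vs. {vs ! i, vs ! ((i + 1) mod length vs)} \<in> EF"
    using assms unfolding has_cycle_def by blast
  define k where "k = nat \<lceil>d\<rceil> + 1"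
  have k: "1 \<le> k" "d \<le> real k" unfolding k_def by linarith+
  show ?thesis
    using eventually_ge_at_top[of "(8 * k) ^ length vs"]
  proof (rule eventually_mono)
    fix n assume "(8 * k) ^ length vs \<le> n"
    then obtain H where H: "H \<subseteq> vpairs {0..<n}" "k * n \<le> card H"
      and free: "\<forall>Z\<in>Kn_cycles n (length vs). \<not> Z \<subseteq> H"
      using exists_cycle_free_graph[OF cycle(1) k(1)] by blast
    have "\<forall>D\<in>Kn_copies n. \<not> D \<subseteq> H"
      using Kn_copy_contains_cycle[OF cycle] free by blast
    then have "k * n \<le> ex_num n VF EF" using ex_num_ge[OF H(1)] H(2) by linarith
    then have "real k * real n \<le> real (ex_num n VF EF)" by (metis of_nat_le_iff of_nat_mult)
    moreover have "d * real n \<le> real k * real n" using k(2) by (simp add: mult_right_mono)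
    ultimately show "d * real n \<le> real (ex_num n VF EF)" by linarith
  qed
qed

lemma Lgame_ex_num_close:
  assumes "card VF \<le> n"
  shows "\<bar>real (n choose 2) - real (Lgame n VF EF) - real (ex_num n VF EF)\<bar>
    \<le> (2 * real (card VF) + 1) * real n"
proof -
  have "0 < card VF" using finite_VF connected unfolding graph_connected_def by auto
  then have "1 \<le> n" using assms by simp
  then have "n choose 2 \<le> Lgame n VF EF + ex_num n VF EF + n"
    and "Lgame n VF EF + ex_num n VF EF \<le> (n choose 2) + 2 * (card VF * n)"
    using Lgame_exa1_bounds[OF assms] exa1_le_ex_num[OF assms] ex_num_le_exa1[OF assms] by linarith+
  then have "real (n choose 2) \<le> real (Lgame n VF EF) + real (ex_num n VF EF) + real n"
    and "real (Lgame n VF EF) + real (ex_num n VF EF) \<le> real (n choose 2) + 2 * (real (card VF) * real n)"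
    by (simp_all flip: of_nat_add of_nat_mult)
  moreover have "0 \<le> real (card VF) * real n" by simp
  moreover have "(2 * real (card VF) + 1) * real n = 2 * (real (card VF) * real n) + real n"
    by (simp add: algebra_simps)
  ultimately show ?thesis unfolding abs_le_iff by linarith
qed

lemma Lgame_asymptotic:
  assumes "has_cycle VF EF"
  shows "\<exists>g :: nat \<Rightarrow> real. g \<longlonglongrightarrow> 0 \<and> (\<forall>\<^sub>F n in sequentially.
    real (Lgame n VF EF) = real (n choose 2) - (1 + g n) * real (ex_num n VF EF))"
proof -
  have close: "\<forall>\<^sub>F n in sequentially.
      \<bar>real (n choose 2) - real (Lgame n VF EF) - real (ex_num n VF EF)\<bar>
        \<le> (2 * real (card VF) + 1) * real n"
    using eventually_ge_at_top[of "card VF"] by (rule eventually_mono) (rule Lgame_ex_num_close)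
  obtain g where g: "g \<longlonglongrightarrow> 0" and "\<forall>\<^sub>F n in sequentially.
      real (n choose 2) - real (Lgame n VF EF) = (1 + g n) * real (ex_num n VF EF)"
    using eventually_eq_one_plus_vanishing[OF ex_num_superlinear[OF assms] close] by (elim exE conjE)
  then have "\<forall>\<^sub>F n in sequentially.
      real (Lgame n VF EF) = real (n choose 2) - (1 + g n) * real (ex_num n VF EF)"
    by (elim eventually_mono) linarith
  then show ?thesis using g by blast
qed

end

theorem proposition4p1:
  fixes VF :: "'b set" and EF :: "'b set set"
  assumes "simple_graph VF EF" and "graph_connected VF EF" and "EF \<noteq> {}"
  shows "(\<forall>\<^sub>F n in sequentially. n choose 2 \<le> Lgame n VF EF + exa1 n VF EF)
    \<and> (\<exists>C::real. \<forall>\<^sub>F n in sequentially.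
          real (Lgame n VF EF + exa1 n VF EF) \<le> real (n choose 2) + C * real n)
    \<and> (\<not> is_tree VF EF \<longrightarrow>
         (\<exists>g :: nat \<Rightarrow> real. g \<longlonglongrightarrow> 0 \<and> (\<forall>\<^sub>F n in sequentially.
            real (Lgame n VF EF) = real (n choose 2) - (1 + g n) * real (ex_num n VF EF))))"
proof -
  interpret connected_pattern VF EF by unfold_locales (fact assms)+
  have large: "\<forall>\<^sub>F n in sequentially. card VF \<le> n" by (rule eventually_ge_at_top)
  have "\<forall>\<^sub>F n in sequentially. n choose 2 \<le> Lgame n VF EF + exa1 n VF EF"
    using large by (rule eventually_mono) (rule Lgame_exa1_bounds(1))
  moreover have "\<forall>\<^sub>F n in sequentially.
      real (Lgame n VF EF + exa1 n VF EF) \<le> real (n choose 2) + real (card VF) * real n"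
    using large by (rule eventually_mono)
      (simp only: Lgame_exa1_bounds(2) of_nat_add[symmetric] of_nat_mult[symmetric] of_nat_le_iff)
  moreover have "has_cycle VF EF" if "\<not> is_tree VF EF"
    using that assms(2) unfolding is_tree_def by blast
  ultimately show ?thesis using Lgame_asymptotic by blast
qed

end
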